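(* Let $n\ge 2$ and $m\ge 1$, let $(\mathbb{R}^n,g_0)$ be Euclidean space with coordinates $x=(x_1,\dots,x_n)$ and metric components $(g_0)_{ij}=\delta_{ij}$, and let $(F^m,g_F)$ be a Riemannian Einstein manifold with constant Ricci curvature $\lambda_F$, i.e. $\mathrm{Ric}_{g_F}=\lambda_F g_F$. Let $f,h:\mathbb{R}^n\to\mathbb{R}$ be smooth functions with $f>0$, and suppose the warped product $M=\mathbb{R}^n\times_f F^m$ with metric $g=g_0\oplus f^2 g_F$ is a gradient Ricci soliton with potential function $h$, i.e. $\mathrm{Ric}_g+\mathrm{Hess}_g(h)=\rho g$ for a constant $\rho\in\mathbb{R}$. If $f=f(x_1)$ depends only on $x_1$, then there exist constants $a_k,b_k\in\mathbb{R}$ and a smooth function $h_1$ of one variable such that $$h(x_1,\dots,x_n)=h_1(x_1)+\sum_{k=2}^{n}\Big(\frac{\rho}{2}x_k^2+a_kx_k+b_k\Big),$$ and $h_1$ satisfies $$\begin{cases} \lambda_F-f f''-(m-1)(f')^2+f f' h_1'=\rho f^2,\\ f h_1''-m f''=\rho f, \end{cases}$$ where primes denote derivatives with respect to $x_1$.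
   Context: A warped product $B\times_f F$ is the product manifold $B\times F$ with metric $g_B\oplus f^2 g_F$, where $f:B\to\mathbb{R}$ is positive. Functions on $\mathbb{R}^n$ (such as $f$ and $h$) are identified with their lifts to $M$. *)

theory Defs
  imports "HOL-Analysis.Analysis"
begin

definition pd :: "'a::euclidean_space \<Rightarrow> ('a \<Rightarrow> real) \<Rightarrow> 'a \<Rightarrow> real" where
  "pd b \<phi> x = deriv (\<lambda>t. \<phi> (x + t *\<^sub>R b)) 0"

definition coord_smooth_on :: "'a::euclidean_space set \<Rightarrow> ('a \<Rightarrow> real) \<Rightarrow> bool" where
  "coord_smooth_on S \<phi> \<longleftrightarrow>
     (\<forall>bs. set bs \<subseteq> Basis \<longrightarrow>
        continuous_on S (foldr pd bs \<phi>) \<and>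
        (\<forall>b\<in>Basis. \<forall>x\<in>S. (\<lambda>t. foldr pd bs \<phi> (x + t *\<^sub>R b)) differentiable (at 0)))"

text \<open>A metric in coordinates: g p i j is the component g_ij at the point p
(i, j basis vectors).\<close>
definition riemannian_metric_on :: "'a::euclidean_space set \<Rightarrow> ('a \<Rightarrow> 'a \<Rightarrow> 'a \<Rightarrow> real) \<Rightarrow> bool" where
  "riemannian_metric_on U g \<longleftrightarrow> open U \<and>
     (\<forall>i\<in>Basis. \<forall>j\<in>Basis. coord_smooth_on U (\<lambda>p. g p i j) \<and> (\<forall>p\<in>U. g p i j = g p j i)) \<and>
     (\<forall>p\<in>U. \<forall>w::'a. w \<noteq> 0 \<longrightarrow> (\<Sum>i\<in>Basis. \<Sum>j\<in>Basis. (w \<bullet> i) * (w \<bullet> j) * g p i j) > 0)"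

definition metric_inv :: "('a::euclidean_space \<Rightarrow> 'a \<Rightarrow> 'a \<Rightarrow> real) \<Rightarrow> 'a \<Rightarrow> 'a \<Rightarrow> 'a \<Rightarrow> real" where
  "metric_inv g p = (THE G. (\<forall>i j. (i \<notin> Basis \<or> j \<notin> Basis) \<longrightarrow> G i j = 0) \<and>
      (\<forall>i\<in>Basis. \<forall>j\<in>Basis. (\<Sum>k\<in>Basis. g p i k * G k j) = (if i = j then 1 else 0)))"

definition christoffel :: "('a::euclidean_space \<Rightarrow> 'a \<Rightarrow> 'a \<Rightarrow> real) \<Rightarrow> 'a \<Rightarrow> 'a \<Rightarrow> 'a \<Rightarrow> 'a \<Rightarrow> real" where
  "christoffel g p k i j = (1/2) * (\<Sum>l\<in>Basis. metric_inv g p k l *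
      (pd i (\<lambda>q. g q j l) p + pd j (\<lambda>q. g q i l) p - pd l (\<lambda>q. g q i j) p))"

definition ricci :: "('a::euclidean_space \<Rightarrow> 'a \<Rightarrow> 'a \<Rightarrow> real) \<Rightarrow> 'a \<Rightarrow> 'a \<Rightarrow> 'a \<Rightarrow> real" where
  "ricci g p i j = (\<Sum>k\<in>Basis. pd k (\<lambda>q. christoffel g q k i j) p - pd j (\<lambda>q. christoffel g q k i k) p
      + (\<Sum>l\<in>Basis. christoffel g p k k l * christoffel g p l i j - christoffel g p k j l * christoffel g p l i k))"

definition hessian :: "('a::euclidean_space \<Rightarrow> 'a \<Rightarrow> 'a \<Rightarrow> real) \<Rightarrow> ('a \<Rightarrow> real) \<Rightarrow> 'a \<Rightarrow> 'a \<Rightarrow> 'a \<Rightarrow> real" where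
  "hessian g \<phi> p i j = pd i (pd j \<phi>) p - (\<Sum>k\<in>Basis. christoffel g p k i j * pd k \<phi> p)"

definition warped_metric :: "('a::euclidean_space \<Rightarrow> real) \<Rightarrow> ('b::euclidean_space \<Rightarrow> 'b \<Rightarrow> 'b \<Rightarrow> real)
    \<Rightarrow> ('a \<times> 'b) \<Rightarrow> ('a \<times> 'b) \<Rightarrow> ('a \<times> 'b) \<Rightarrow> real" where
  "warped_metric f gF p u v =
     (if snd u = 0 \<and> snd v = 0 then fst u \<bullet> fst v
      else if fst u = 0 \<and> fst v = 0 then (f (fst p))^2 * gF (snd p) (snd u) (snd v)
      else 0)"

end

theory Submission
  imports Defs
begin

text \<open>In product coordinates the Christoffel symbols of \<open>g\<^sub>0 \<oplus> f\<^sup>2 g\<^sub>F\<close> are given by O'Neill's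
  formulas, and the base-base and fibre-fibre components of the soliton equation become
  \<open>\<partial>\<^sub>i\<partial>\<^sub>jh - (m/f) \<partial>\<^sub>i\<partial>\<^sub>jf = \<rho> \<delta>\<^sub>i\<^sub>j\<close> and
  \<open>Ric\<^sub>F - (f \<Delta>f + (m-1) |\<nabla>f|\<^sup>2) g\<^sub>F + f \<langle>\<nabla>f, \<nabla>h\<rangle> g\<^sub>F = \<rho> f\<^sup>2 g\<^sub>F\<close>.
  If \<open>f\<close> depends on \<open>x\<^sub>1\<close> only, the first equation says that every second partial derivative of
  \<open>h\<close> involving some \<open>x\<^sub>k\<close>, \<open>k \<ge> 2\<close>, equals \<open>\<rho> \<delta>\<^sub>i\<^sub>j\<close>; integrating twice separates off the quadratic
  polynomials in \<open>x\<^sub>2, \<dots>, x\<^sub>n\<close>. The remaining \<open>(1,1)\<close>-component, and the fibre equation with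
  \<open>Ric\<^sub>F = \<lambda>\<^sub>F g\<^sub>F\<close> divided by \<open>g\<^sub>F(a,a) > 0\<close>, are the two ODEs for \<open>h\<^sub>1(t) = h(t e\<^sub>1)\<close>.\<close>

lemma has_real_derivative_pd:
  "(\<lambda>t. \<phi> (x + t *\<^sub>R b)) differentiable (at 0) \<Longrightarrow>
   ((\<lambda>t. \<phi> (x + t *\<^sub>R b)) has_real_derivative pd b \<phi> x) (at 0)"
  by (simp add: pd_def DERIV_deriv_iff_real_differentiable)

lemma pd_const [simp]: "pd b (\<lambda>x. c) x = 0"
  by (simp add: pd_def)

lemma pd_mult:
  assumes "(\<lambda>t. A (x + t *\<^sub>R b)) differentiable (at 0)" "(\<lambda>t. B (x + t *\<^sub>R b)) differentiable (at 0)"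
  shows "pd b (\<lambda>x. A x * B x) x = A x * pd b B x + pd b A x * B x"
proof -
  have "((\<lambda>t. A (x + t *\<^sub>R b) * B (x + t *\<^sub>R b)) has_real_derivative
      A x * pd b B x + pd b A x * B x) (at 0)"
    using DERIV_mult[OF has_real_derivative_pd[OF assms(1)] has_real_derivative_pd[OF assms(2)]]
    by (simp add: algebra_simps)
  then show ?thesis unfolding pd_def by (simp add: DERIV_imp_deriv)
qed

lemma pd_divide:
  assumes "(\<lambda>t. A (x + t *\<^sub>R b)) differentiable (at 0)" "(\<lambda>t. B (x + t *\<^sub>R b)) differentiable (at 0)"
    and "B x \<noteq> 0"
  shows "pd b (\<lambda>x. A x / B x) x = (pd b A x * B x - A x * pd b B x) / (B x)\<^sup>2"
proof -
  have "((\<lambda>t. A (x + t *\<^sub>R b) / B (x + t *\<^sub>R b)) has_real_derivative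
      (pd b A x * B (x + 0 *\<^sub>R b) - A (x + 0 *\<^sub>R b) * pd b B x) / (B (x + 0 *\<^sub>R b) * B (x + 0 *\<^sub>R b))) (at 0)"
    by (rule DERIV_divide[OF has_real_derivative_pd[OF assms(1)] has_real_derivative_pd[OF assms(2)]])
       (simp add: assms)
  then show ?thesis unfolding pd_def by (simp add: DERIV_imp_deriv power2_eq_square)
qed

lemma pd_cong_open:
  assumes "open S" "p \<in> S" "\<And>q. q \<in> S \<Longrightarrow> \<phi> q = \<psi> q"
  shows "pd b \<phi> p = pd b \<psi> p"
proof -
  have "open ((\<lambda>t::real. p + t *\<^sub>R b) -` S)"
    using assms(1) by (intro open_vimage continuous_intros)
  moreover have "0 \<in> (\<lambda>t::real. p + t *\<^sub>R b) -` S" using assms(2) by simp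
  ultimately have "eventually (\<lambda>t. p + t *\<^sub>R b \<in> S) (nhds 0)"
    using eventually_nhds_in_open by fastforce
  then have "eventually (\<lambda>t. \<phi> (p + t *\<^sub>R b) = \<psi> (p + t *\<^sub>R b)) (nhds 0)"
    by eventually_elim (simp add: assms(3))
  then show ?thesis unfolding pd_def by (rule deriv_cong_ev) simp
qed

lemma pd_Pair_fst [simp]: "pd (u, 0) \<phi> (x, y) = pd u (\<lambda>x'. \<phi> (x', y)) x"
  by (simp add: pd_def)

lemma pd_Pair_snd [simp]: "pd (0, v) \<phi> (x, y) = pd v (\<lambda>y'. \<phi> (x, y')) y"
  by (simp add: pd_def)

lemma deriv_shift_0: "deriv (\<lambda>s. g (t + s)) 0 = deriv g (t::real)"
  unfolding deriv_def using DERIV_shift[of g _ 0 t] by (simp add: add.commute)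

lemma has_real_derivative_pd_line:
  assumes "\<And>z. (\<lambda>t. \<phi> (z + t *\<^sub>R e)) differentiable (at 0)"
  shows "((\<lambda>s. \<phi> (x + s *\<^sub>R e)) has_real_derivative pd e \<phi> (x + s *\<^sub>R e)) (at s)"
proof -
  have "((\<lambda>t. \<phi> ((x + s *\<^sub>R e) + t *\<^sub>R e)) has_real_derivative pd e \<phi> (x + s *\<^sub>R e)) (at 0)"
    by (rule has_real_derivative_pd[OF assms])
  then have "((\<lambda>t. \<phi> (x + (t + s) *\<^sub>R e)) has_real_derivative pd e \<phi> (x + s *\<^sub>R e)) (at 0)"
    by (simp add: scaleR_add_left add.assoc add.commute add.left_commute)
  then show ?thesis using DERIV_shift[of "\<lambda>s. \<phi> (x + s *\<^sub>R e)" _ 0 s] by simp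
qed

lemma deriv_scaleR_eq_pd: "deriv (\<lambda>t. \<phi> (t *\<^sub>R e)) t = pd e \<phi> (t *\<^sub>R e)"
  using deriv_shift_0[of "\<lambda>t. \<phi> (t *\<^sub>R e)" t] by (simp add: pd_def scaleR_add_left)

lemma pd_comp_inner:
  fixes e k :: "'a::euclidean_space"
  assumes "k \<in> Basis" "e \<in> Basis"
  shows "pd k (\<lambda>x. \<psi> (x \<bullet> e)) x = (k \<bullet> e) * deriv \<psi> (x \<bullet> e)"
proof (cases "k = e")
  case True
  then have "(\<lambda>t. \<psi> ((x + t *\<^sub>R k) \<bullet> e)) = (\<lambda>t. \<psi> (x \<bullet> e + t))"
    using assms by (simp add: inner_add_left)
  then show ?thesis using True assms by (simp add: pd_def deriv_shift_0)
next
  case False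
  then show ?thesis using assms by (simp add: pd_def inner_add_left inner_not_same_Basis)
qed

lemma coord_smooth_on_differentiable:
  assumes "coord_smooth_on S \<phi>" "set bs \<subseteq> Basis" "b \<in> Basis" "x \<in> S"
  shows "(\<lambda>t. foldr pd bs \<phi> (x + t *\<^sub>R b)) differentiable (at 0)"
  using assms unfolding coord_smooth_on_def by blast

lemma foldr_pd_comp_scaleR:
  assumes "set bs \<subseteq> (Basis::real set)"
  shows "foldr pd bs (\<lambda>t. \<phi> (t *\<^sub>R e)) = (\<lambda>t. foldr pd (map (\<lambda>_. e) bs) \<phi> (t *\<^sub>R e))"
  using assms
proof (induction bs)
  case Nil
  then show ?case by simp
next
  case (Cons b bs)
  then have "b = 1" by simp
  with Cons show ?case by (intro ext) (simp add: pd_def scaleR_add_left)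
qed

lemma coord_smooth_on_comp_scaleR:
  fixes \<phi> :: "'a::euclidean_space \<Rightarrow> real"
  assumes smooth: "coord_smooth_on UNIV \<phi>" and e: "e \<in> Basis"
  shows "coord_smooth_on UNIV (\<lambda>t::real. \<phi> (t *\<^sub>R e))"
  unfolding coord_smooth_on_def
proof (intro allI impI conjI ballI)
  fix bs :: "real list" assume bs: "set bs \<subseteq> Basis"
  have es: "set (map (\<lambda>_. e) bs) \<subseteq> Basis" using e by auto
  have "continuous_on UNIV (foldr pd (map (\<lambda>_. e) bs) \<phi>)"
    using smooth es unfolding coord_smooth_on_def by blast
  then show "continuous_on UNIV (foldr pd bs (\<lambda>t. \<phi> (t *\<^sub>R e)))"
    unfolding foldr_pd_comp_scaleR[OF bs]
    by (rule continuous_on_compose2) (auto intro!: continuous_intros)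
  fix b t :: real assume "b \<in> Basis"
  moreover have "(\<lambda>s. foldr pd (map (\<lambda>_. e) bs) \<phi> (t *\<^sub>R e + s *\<^sub>R e)) differentiable (at 0)"
    using coord_smooth_on_differentiable[OF smooth es e] by blast
  ultimately show "(\<lambda>s. foldr pd bs (\<lambda>t. \<phi> (t *\<^sub>R e)) (t + s *\<^sub>R b)) differentiable (at 0)"
    unfolding foldr_pd_comp_scaleR[OF bs] by (simp add: scaleR_add_left)
qed

lemma sum_Basis_prod:
  fixes F :: "('a::euclidean_space \<times> 'b::euclidean_space) \<Rightarrow> real"
  shows "(\<Sum>K\<in>Basis. F K) = (\<Sum>i\<in>Basis. F (i, 0)) + (\<Sum>i\<in>Basis. F (0, i))"
proof -
  have "inj_on (\<lambda>u. (u::'a, 0::'b)) Basis" "inj_on (\<lambda>u. (0::'a, u::'b)) Basis"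
    by (auto intro!: inj_onI)
  moreover have "(\<lambda>u. (u::'a, 0::'b)) ` Basis \<inter> (\<lambda>u. (0::'a, u::'b)) ` Basis = {}"
    by (auto simp: nonzero_Basis)
  ultimately show ?thesis
    by (simp add: Basis_prod_def sum.union_disjoint sum.reindex)
qed

lemma Basis_prod_cases:
  assumes "(K::'a::euclidean_space \<times> 'b::euclidean_space) \<in> Basis"
  obtains k where "k \<in> Basis" "K = (k, 0)" | c where "c \<in> Basis" "K = (0, c)"
  using assms by (auto simp: Basis_prod_def)

lemma Pair_zero_in_Basis_iff [simp]:
  "((k::'a::euclidean_space), (0::'b::euclidean_space)) \<in> Basis \<longleftrightarrow> k \<in> Basis"
  "((0::'a), (c::'b)) \<in> Basis \<longleftrightarrow> c \<in> Basis"
  by (auto simp: Basis_prod_def nonzero_Basis)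

lemma sum_inner_Basis_delta [simp]:
  fixes k :: "'a::euclidean_space"
  assumes "k \<in> Basis"
  shows "(\<Sum>l\<in>Basis. (k \<bullet> l) * F l) = F k" "(\<Sum>l\<in>Basis. F l * (k \<bullet> l)) = F k"
    "(\<Sum>l\<in>Basis. F l * (l \<bullet> k)) = F k"
  using assms by (simp_all add: inner_Basis if_distrib[of "\<lambda>x. x * _"] if_distrib[of "\<lambda>x. _ * x"]
      sum.delta cong: if_cong)

lemma metric_inv_eqI:
  fixes g :: "'a::euclidean_space \<Rightarrow> 'a \<Rightarrow> 'a \<Rightarrow> real"
  assumes zero: "\<And>i j. i \<notin> Basis \<or> j \<notin> Basis \<Longrightarrow> Y i j = 0"
    and right: "\<And>i j. i \<in> Basis \<Longrightarrow> j \<in> Basis \<Longrightarrow> (\<Sum>k\<in>Basis. g p i k * Y k j) = (if i = j then 1 else 0)"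
    and left: "\<And>i j. i \<in> Basis \<Longrightarrow> j \<in> Basis \<Longrightarrow> (\<Sum>k\<in>Basis. Y i k * g p k j) = (if i = j then 1 else 0)"
  shows "metric_inv g p = Y"
  unfolding metric_inv_def
proof (rule the_equality)
  show "(\<forall>i j. i \<notin> Basis \<or> j \<notin> Basis \<longrightarrow> Y i j = 0) \<and>
      (\<forall>i\<in>Basis. \<forall>j\<in>Basis. (\<Sum>k\<in>Basis. g p i k * Y k j) = (if i = j then 1 else 0))"
    using zero right by blast
next
  fix G assume "(\<forall>i j. i \<notin> Basis \<or> j \<notin> Basis \<longrightarrow> G i j = 0) \<and>
      (\<forall>i\<in>Basis. \<forall>j\<in>Basis. (\<Sum>k\<in>Basis. g p i k * G k j) = (if i = j then 1 else 0))"
  then have G_zero: "\<And>i j. i \<notin> Basis \<or> j \<notin> Basis \<Longrightarrow> G i j = 0"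
    and G_right: "\<And>i j. i \<in> Basis \<Longrightarrow> j \<in> Basis \<Longrightarrow> (\<Sum>k\<in>Basis. g p i k * G k j) = (if i = j then 1 else 0)"
    by blast+
  show "G = Y"
  proof (intro ext)
    fix i j
    show "G i j = Y i j"
    proof (cases "i \<in> Basis \<and> j \<in> Basis")
      case False
      then show ?thesis using G_zero zero by metis
    next
      case True
      \<comment> \<open>a right inverse equals any left inverse: \<open>G = (Y g) G = Y (g G) = Y\<close>\<close>
      have "G i j = (\<Sum>k\<in>Basis. (if i = k then 1 else 0) * G k j)"
        using True by (simp add: if_distrib[of "\<lambda>x. x * _"] cong: if_cong)
      also have "\<dots> = (\<Sum>k\<in>Basis. (\<Sum>l\<in>Basis. Y i l * g p l k) * G k j)"
        using True left by (intro sum.cong) auto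
      also have "\<dots> = (\<Sum>k\<in>Basis. \<Sum>l\<in>Basis. Y i l * (g p l k * G k j))"
        by (simp add: sum_distrib_right mult.assoc)
      also have "\<dots> = (\<Sum>l\<in>Basis. Y i l * (\<Sum>k\<in>Basis. g p l k * G k j))"
        by (subst sum.swap) (simp add: sum_distrib_left)
      also have "\<dots> = (\<Sum>l\<in>Basis. Y i l * (if l = j then 1 else 0))"
        using G_right True by (intro sum.cong) auto
      also have "\<dots> = Y i j"
        using True by (simp add: if_distrib[of "\<lambda>x. _ * x"] cong: if_cong)
      finally show ?thesis .
    qed
  qed
qed

lemma positive_definite_inverse_exists:
  fixes g :: "'a::euclidean_space \<Rightarrow> 'a \<Rightarrow> real"
  assumes pos: "\<And>w::'a. w \<noteq> 0 \<Longrightarrow> (\<Sum>i\<in>Basis. \<Sum>j\<in>Basis. (w \<bullet> i) * (w \<bullet> j) * g i j) > 0"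
  obtains Y where "\<And>i j. i \<notin> Basis \<or> j \<notin> Basis \<Longrightarrow> Y i j = 0"
    "\<And>i j. i \<in> Basis \<Longrightarrow> j \<in> Basis \<Longrightarrow> (\<Sum>k\<in>Basis. g i k * Y k j) = (if i = j then 1 else 0)"
    "\<And>i j. i \<in> Basis \<Longrightarrow> j \<in> Basis \<Longrightarrow> (\<Sum>k\<in>Basis. Y i k * g k j) = (if i = j then 1 else 0)"
proof -
  define L where "L = (\<lambda>w::'a. \<Sum>i\<in>Basis. (\<Sum>j\<in>Basis. g i j * (w \<bullet> j)) *\<^sub>R i)"
  have L_inner: "L w \<bullet> i = (\<Sum>j\<in>Basis. g i j * (w \<bullet> j))" if "i \<in> Basis" for w i
    using that by (simp add: L_def inner_sum_left)
  have L_Basis: "L j = (\<Sum>k\<in>Basis. g k j *\<^sub>R k)" if "j \<in> Basis" for j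
    using that by (simp add: L_def)
  have lin: "linear L"
    unfolding L_def by (intro bounded_linear.linear bounded_linear_intros)
  have "inj L"
  proof (rule linear_inj_iff_eq_0[OF lin, THEN iffD2], intro allI impI)
    fix w assume "L w = 0"
    then have "(\<Sum>i\<in>Basis. (w \<bullet> i) * (L w \<bullet> i)) = 0" by simp
    then have "(\<Sum>i\<in>Basis. \<Sum>j\<in>Basis. (w \<bullet> i) * (w \<bullet> j) * g i j) = 0"
      by (simp add: L_inner sum_distrib_left mult_ac)
    then show "w = 0" using pos[of w] by (cases "w = 0") auto
  qed
  then obtain M where M: "linear M" "\<forall>x. M (L x) = x" "\<forall>x. L (M x) = x"
    using linear_injective_isomorphism[OF lin] by auto
  show ?thesis
  proof
    fix i j :: 'a
    assume "i \<notin> Basis \<or> j \<notin> Basis"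
    then show "(if i \<in> Basis \<and> j \<in> Basis then M j \<bullet> i else 0) = 0" by auto
  next
    fix i j :: 'a assume ij: "i \<in> Basis" "j \<in> Basis"
    have "(\<Sum>k\<in>Basis. g i k * (if k \<in> Basis \<and> j \<in> Basis then M j \<bullet> k else 0)) = L (M j) \<bullet> i"
      using ij by (simp add: L_inner)
    then show "(\<Sum>k\<in>Basis. g i k * (if k \<in> Basis \<and> j \<in> Basis then M j \<bullet> k else 0)) = (if i = j then 1 else 0)"
      using ij M(3) by (simp add: inner_Basis)
  next
    fix i j :: 'a assume ij: "i \<in> Basis" "j \<in> Basis"
    have "(\<Sum>k\<in>Basis. (if i \<in> Basis \<and> k \<in> Basis then M k \<bullet> i else 0) * g k j)
        = M (\<Sum>k\<in>Basis. g k j *\<^sub>R k) \<bullet> i"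
      using ij by (simp add: linear_sum[OF M(1)] linear_scale[OF M(1)] inner_sum_left mult.commute)
    then show "(\<Sum>k\<in>Basis. (if i \<in> Basis \<and> k \<in> Basis then M k \<bullet> i else 0) * g k j) = (if i = j then 1 else 0)"
      using ij M(2) by (simp add: L_Basis[symmetric] inner_Basis)
  qed
qed

lemma metric_inv_positive_definite:
  fixes g :: "'a::euclidean_space \<Rightarrow> 'a \<Rightarrow> 'a \<Rightarrow> real"
  assumes "\<And>w::'a. w \<noteq> 0 \<Longrightarrow> (\<Sum>i\<in>Basis. \<Sum>j\<in>Basis. (w \<bullet> i) * (w \<bullet> j) * g p i j) > 0"
  shows "\<And>i j. i \<notin> Basis \<or> j \<notin> Basis \<Longrightarrow> metric_inv g p i j = 0"
    and "\<And>i j. i \<in> Basis \<Longrightarrow> j \<in> Basis \<Longrightarrow>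
      (\<Sum>k\<in>Basis. g p i k * metric_inv g p k j) = (if i = j then 1 else 0)"
    and "\<And>i j. i \<in> Basis \<Longrightarrow> j \<in> Basis \<Longrightarrow>
      (\<Sum>k\<in>Basis. metric_inv g p i k * g p k j) = (if i = j then 1 else 0)"
proof -
  obtain Y where Y: "\<And>i j. i \<notin> Basis \<or> j \<notin> Basis \<Longrightarrow> Y i j = 0"
    "\<And>i j. i \<in> Basis \<Longrightarrow> j \<in> Basis \<Longrightarrow> (\<Sum>k\<in>Basis. g p i k * Y k j) = (if i = j then 1 else 0)"
    "\<And>i j. i \<in> Basis \<Longrightarrow> j \<in> Basis \<Longrightarrow> (\<Sum>k\<in>Basis. Y i k * g p k j) = (if i = j then 1 else 0)"
    using positive_definite_inverse_exists[of "g p"] assms by blast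
  then have "metric_inv g p = Y" by (intro metric_inv_eqI)
  with Y show "\<And>i j. i \<notin> Basis \<or> j \<notin> Basis \<Longrightarrow> metric_inv g p i j = 0"
    and "\<And>i j. i \<in> Basis \<Longrightarrow> j \<in> Basis \<Longrightarrow>
      (\<Sum>k\<in>Basis. g p i k * metric_inv g p k j) = (if i = j then 1 else 0)"
    and "\<And>i j. i \<in> Basis \<Longrightarrow> j \<in> Basis \<Longrightarrow>
      (\<Sum>k\<in>Basis. metric_inv g p i k * g p k j) = (if i = j then 1 else 0)"
    by simp_all
qed

lemma warped_metric_base_base [simp]: "warped_metric f gF q (i, 0) (j, 0) = i \<bullet> j"
  by (simp add: warped_metric_def)

lemma warped_metric_base_fibre [simp]:
  "i \<in> Basis \<Longrightarrow> d \<in> Basis \<Longrightarrow> warped_metric f gF q (i, 0) (0, d) = 0"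
  by (simp add: warped_metric_def nonzero_Basis)

lemma warped_metric_fibre_base [simp]:
  "c \<in> Basis \<Longrightarrow> j \<in> Basis \<Longrightarrow> warped_metric f gF q (0, c) (j, 0) = 0"
  by (simp add: warped_metric_def nonzero_Basis)

lemma warped_metric_fibre_fibre [simp]:
  "c \<in> Basis \<Longrightarrow> warped_metric f gF q (0, c) (0, d) = (f (fst q))\<^sup>2 * gF (snd q) c d"
  by (simp add: warped_metric_def nonzero_Basis)

definition warped_metric_inv ::
    "('a::euclidean_space \<Rightarrow> real) \<Rightarrow> ('b::euclidean_space \<Rightarrow> 'b \<Rightarrow> 'b \<Rightarrow> real)
      \<Rightarrow> 'a \<times> 'b \<Rightarrow> 'a \<times> 'b \<Rightarrow> 'a \<times> 'b \<Rightarrow> real" where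
  "warped_metric_inv f gF q K L =
     (if K \<in> Basis \<and> L \<in> Basis then
        (if snd K = 0 \<and> snd L = 0 then fst K \<bullet> fst L
         else if fst K = 0 \<and> fst L = 0 then metric_inv gF (snd q) (snd K) (snd L) / (f (fst q))\<^sup>2
         else 0)
      else 0)"

lemma warped_metric_inv_simps [simp]:
  "i \<in> Basis \<Longrightarrow> j \<in> Basis \<Longrightarrow> warped_metric_inv f gF q (i, 0) (j, 0) = i \<bullet> j"
  "i \<in> Basis \<Longrightarrow> d \<in> Basis \<Longrightarrow> warped_metric_inv f gF q (i, 0) (0, d) = 0"
  "c \<in> Basis \<Longrightarrow> j \<in> Basis \<Longrightarrow> warped_metric_inv f gF q (0, c) (j, 0) = 0"
  "c \<in> Basis \<Longrightarrow> d \<in> Basis \<Longrightarrow>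
     warped_metric_inv f gF q (0, c) (0, d) = metric_inv gF (snd q) c d / (f (fst q))\<^sup>2"
  by (simp_all add: warped_metric_inv_def nonzero_Basis)

text \<open>O'Neill's formulas for the Christoffel symbols of a warped product with Euclidean base, in
  product coordinates: \<open>\<Gamma>\<^sup>k\<^sub>a\<^sub>b = -f \<partial>\<^sub>kf g\<^sub>F(a,b)\<close>, \<open>\<Gamma>\<^sup>c\<^sub>i\<^sub>b = \<Gamma>\<^sup>c\<^sub>b\<^sub>i = (\<partial>\<^sub>if/f) \<delta>\<^sup>c\<^sub>b\<close>,
  \<open>\<Gamma>\<^sup>c\<^sub>a\<^sub>b = \<Gamma>\<^sub>F\<^sup>c\<^sub>a\<^sub>b\<close>, all others zero.\<close>

definition warped_christoffel ::
    "('a::euclidean_space \<Rightarrow> real) \<Rightarrow> ('b::euclidean_space \<Rightarrow> 'b \<Rightarrow> 'b \<Rightarrow> real)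
      \<Rightarrow> 'a \<times> 'b \<Rightarrow> 'a \<times> 'b \<Rightarrow> 'a \<times> 'b \<Rightarrow> 'a \<times> 'b \<Rightarrow> real" where
  "warped_christoffel f gF q K I J =
     (if snd K = 0 then
        (if fst I = 0 \<and> fst J = 0 then - f (fst q) * pd (fst K) f (fst q) * gF (snd q) (snd I) (snd J)
         else 0)
      else if snd I = 0 \<and> snd J = 0 then 0
      else if snd I = 0 then pd (fst I) f (fst q) / f (fst q) * (snd K \<bullet> snd J)
      else if snd J = 0 then pd (fst J) f (fst q) / f (fst q) * (snd K \<bullet> snd I)
      else christoffel gF (snd q) (snd K) (snd I) (snd J))"

lemma warped_christoffel_simps [simp]:
  "k \<in> Basis \<Longrightarrow> i \<in> Basis \<Longrightarrow> warped_christoffel f gF q (k, 0) (i, 0) (j, 0) = 0"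
  "k \<in> Basis \<Longrightarrow> i \<in> Basis \<Longrightarrow> warped_christoffel f gF q (k, 0) (i, 0) (0, b) = 0"
  "k \<in> Basis \<Longrightarrow> j \<in> Basis \<Longrightarrow> warped_christoffel f gF q (k, 0) (0, a) (j, 0) = 0"
  "k \<in> Basis \<Longrightarrow>
     warped_christoffel f gF q (k, 0) (0, a) (0, b) = - f (fst q) * pd k f (fst q) * gF (snd q) a b"
  "c \<in> Basis \<Longrightarrow> warped_christoffel f gF q (0, c) (i, 0) (j, 0) = 0"
  "c \<in> Basis \<Longrightarrow> i \<in> Basis \<Longrightarrow> b \<in> Basis \<Longrightarrow>
     warped_christoffel f gF q (0, c) (i, 0) (0, b) = pd i f (fst q) / f (fst q) * (c \<bullet> b)"
  "c \<in> Basis \<Longrightarrow> a \<in> Basis \<Longrightarrow> j \<in> Basis \<Longrightarrow>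
     warped_christoffel f gF q (0, c) (0, a) (j, 0) = pd j f (fst q) / f (fst q) * (c \<bullet> a)"
  "c \<in> Basis \<Longrightarrow> a \<in> Basis \<Longrightarrow> b \<in> Basis \<Longrightarrow>
     warped_christoffel f gF q (0, c) (0, a) (0, b) = christoffel gF (snd q) c a b"
  by (simp_all add: warped_christoffel_def nonzero_Basis)

locale warped_product =
  fixes f :: "'a::euclidean_space \<Rightarrow> real" and gF :: "'b::euclidean_space \<Rightarrow> 'b \<Rightarrow> 'b \<Rightarrow> real"
    and U :: "'b set"
  assumes fibre_metric: "riemannian_metric_on U gF"
    and f_smooth: "coord_smooth_on UNIV f" and f_pos: "\<And>x. f x > 0"
begin

abbreviation "g \<equiv> warped_metric f gF"

lemma f_differentiable: "b \<in> Basis \<Longrightarrow> (\<lambda>t. f (x + t *\<^sub>R b)) differentiable (at 0)"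
  using coord_smooth_on_differentiable[OF f_smooth, of "[]"] by simp

lemma pd_f_differentiable:
  "a \<in> Basis \<Longrightarrow> b \<in> Basis \<Longrightarrow> (\<lambda>t. pd a f (x + t *\<^sub>R b)) differentiable (at 0)"
  using coord_smooth_on_differentiable[OF f_smooth, of "[a]"] by simp

lemma f_nonzero [simp]: "f x \<noteq> 0"
  using f_pos[of x] by simp

lemma U_open: "open U"
  using fibre_metric by (simp add: riemannian_metric_on_def)

lemma gF_differentiable:
  assumes "y \<in> U" "b \<in> Basis" "c \<in> Basis" "d \<in> Basis"
  shows "(\<lambda>t. gF (y + t *\<^sub>R b) c d) differentiable (at 0)"
  using fibre_metric assms coord_smooth_on_differentiable[of U "\<lambda>p. gF p c d" "[]"]
  by (simp add: riemannian_metric_on_def)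

lemma gF_sym: "y \<in> U \<Longrightarrow> c \<in> Basis \<Longrightarrow> d \<in> Basis \<Longrightarrow> gF y c d = gF y d c"
  using fibre_metric by (simp add: riemannian_metric_on_def)

lemma gF_pos:
  "y \<in> U \<Longrightarrow> w \<noteq> 0 \<Longrightarrow> (\<Sum>i\<in>Basis. \<Sum>j\<in>Basis. (w \<bullet> i) * (w \<bullet> j) * gF y i j) > 0"
  using fibre_metric by (simp add: riemannian_metric_on_def)

lemma gF_diag_pos:
  assumes "y \<in> U" "c \<in> Basis"
  shows "gF y c c > 0"
proof -
  have "(\<Sum>i\<in>Basis. \<Sum>j\<in>Basis. (c \<bullet> i) * (c \<bullet> j) * gF y i j)
      = (\<Sum>i\<in>Basis. (c \<bullet> i) * (\<Sum>j\<in>Basis. (c \<bullet> j) * gF y i j))"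
    by (simp add: sum_distrib_left mult.assoc)
  also have "\<dots> = gF y c c"
    using assms(2) by simp
  finally show ?thesis using gF_pos[OF assms(1), of c] assms(2) by (simp add: nonzero_Basis)
qed

lemma metric_inv_gF:
  assumes "y \<in> U"
  shows "\<And>i j. i \<notin> Basis \<or> j \<notin> Basis \<Longrightarrow> metric_inv gF y i j = 0"
    and "\<And>i j. i \<in> Basis \<Longrightarrow> j \<in> Basis \<Longrightarrow>
      (\<Sum>k\<in>Basis. gF y i k * metric_inv gF y k j) = (if i = j then 1 else 0)"
    and "\<And>i j. i \<in> Basis \<Longrightarrow> j \<in> Basis \<Longrightarrow>
      (\<Sum>k\<in>Basis. metric_inv gF y i k * gF y k j) = (if i = j then 1 else 0)"
  using metric_inv_positive_definite[of gF y, OF gF_pos[OF assms]] by blast+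

lemma metric_inv_warped:
  assumes q: "snd q \<in> U"
  shows "metric_inv g q = warped_metric_inv f gF q"
proof (rule metric_inv_eqI)
  fix I J :: "'a \<times> 'b"
  assume "I \<notin> Basis \<or> J \<notin> Basis"
  then show "warped_metric_inv f gF q I J = 0" by (auto simp: warped_metric_inv_def)
next
  fix I J :: "'a \<times> 'b" assume I: "I \<in> Basis" and J: "J \<in> Basis"
  show "(\<Sum>K\<in>Basis. g q I K * warped_metric_inv f gF q K J) = (if I = J then 1 else 0)"
    by (cases rule: Basis_prod_cases[OF I]; cases rule: Basis_prod_cases[OF J])
       (simp_all add: sum_Basis_prod nonzero_Basis inner_not_same_Basis metric_inv_gF(2)[OF q])
  show "(\<Sum>K\<in>Basis. warped_metric_inv f gF q I K * g q K J) = (if I = J then 1 else 0)"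
    by (cases rule: Basis_prod_cases[OF I]; cases rule: Basis_prod_cases[OF J])
       (simp_all add: sum_Basis_prod nonzero_Basis inner_not_same_Basis metric_inv_gF(3)[OF q])
qed

lemma pd_base_warped_fibre_fibre [simp]:
  assumes "i \<in> Basis"
  shows "pd i (\<lambda>x'. (f x')\<^sup>2 * gF y c d) x = 2 * f x * pd i f x * gF y c d"
proof -
  have "((\<lambda>t. (f (x + t *\<^sub>R i))\<^sup>2 * gF y c d) has_real_derivative 2 * f x * pd i f x * gF y c d) (at 0)"
    using DERIV_mult[OF DERIV_power[OF has_real_derivative_pd[OF f_differentiable[OF assms]], where n=2]
        DERIV_const[of "gF y c d"]]
    by (simp add: power2_eq_square mult_ac)
  then show ?thesis unfolding pd_def by (simp add: DERIV_imp_deriv)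
qed

lemma pd_fibre_warped_fibre_fibre [simp]:
  assumes "y \<in> U" "b \<in> Basis" "c \<in> Basis" "d \<in> Basis"
  shows "pd b (\<lambda>y'. (f x)\<^sup>2 * gF y' c d) y = (f x)\<^sup>2 * pd b (\<lambda>y'. gF y' c d) y"
proof -
  have "((\<lambda>t. (f x)\<^sup>2 * gF (y + t *\<^sub>R b) c d) has_real_derivative (f x)\<^sup>2 * pd b (\<lambda>y. gF y c d) y) (at 0)"
    using DERIV_cmult[OF has_real_derivative_pd[of "\<lambda>y. gF y c d", OF gF_differentiable[OF assms]]]
    by simp
  then show ?thesis unfolding pd_def by (simp add: DERIV_imp_deriv)
qed

lemma sum_metric_inv_gF:
  assumes "y \<in> U" "c \<in> Basis" "a \<in> Basis"
  shows "(\<Sum>i\<in>Basis. metric_inv gF y c i * (Z * gF y a i) / W) = Z * (c \<bullet> a) / W"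
proof -
  have "(\<Sum>i\<in>Basis. metric_inv gF y c i * (Z * gF y a i) / W)
      = Z / W * (\<Sum>i\<in>Basis. metric_inv gF y c i * gF y i a)"
    using assms by (simp add: sum_distrib_left gF_sym mult_ac)
  also have "\<dots> = Z * (c \<bullet> a) / W"
    using metric_inv_gF(3)[OF assms] assms by (simp add: inner_Basis)
  finally show ?thesis .
qed

lemma christoffel_warped [simp]:
  assumes "snd q \<in> U" "K \<in> Basis" "I \<in> Basis" "J \<in> Basis"
  shows "christoffel g q K I J = warped_christoffel f gF q K I J"
proof -
  obtain x y where q: "q = (x, y)" by fastforce
  show ?thesis
    using assms unfolding q
    apply (cases rule: Basis_prod_cases[OF assms(2)];
        cases rule: Basis_prod_cases[OF assms(3)]; cases rule: Basis_prod_cases[OF assms(4)])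
    apply (simp_all add: christoffel_def metric_inv_warped sum_Basis_prod warped_christoffel_def nonzero_Basis)
    subgoal by (simp add: sum_negf)
    subgoal by (subst sum_metric_inv_gF; simp add: power2_eq_square)
    subgoal by (subst sum_metric_inv_gF; simp add: power2_eq_square)
    subgoal by (rule sum.cong) (simp_all add: field_simps)
    done
qed

lemma pd_fibre_christoffel_warped [simp]:
  "y \<in> U \<Longrightarrow> K \<in> Basis \<Longrightarrow> I \<in> Basis \<Longrightarrow> J \<in> Basis \<Longrightarrow>
   pd b (\<lambda>y'. christoffel g (x, y') K I J) y = pd b (\<lambda>y'. warped_christoffel f gF (x, y') K I J) y"
  by (rule pd_cong_open[OF U_open]) auto

lemma ricci_warped_base_base:
  assumes "y \<in> U" "i \<in> Basis" "j \<in> Basis"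
  shows "ricci g (x, y) (i, 0) (j, 0) = - real DIM('b) * pd j (pd i f) x / f x"
proof -
  have pd_quotient: "pd j (\<lambda>x'. pd i f x' / f x') x = (pd j (pd i f) x * f x - pd i f x * pd j f x) / (f x)\<^sup>2"
    using assms by (intro pd_divide pd_f_differentiable f_differentiable) simp_all
  have "(\<Sum>d\<in>Basis. - (pd j f x * (c \<bullet> d) * (pd i f x * (d \<bullet> c)) / (f x * f x)))
      = - (pd j f x * pd i f x / (f x * f x))" if "c \<in> Basis" for c :: 'b
  proof -
    have "(\<Sum>d\<in>Basis. - (pd j f x * (c \<bullet> d) * (pd i f x * (d \<bullet> c)) / (f x * f x)))
        = (\<Sum>d\<in>Basis. (c \<bullet> d) * (- (pd j f x * pd i f x / (f x * f x))))"
      using that by (intro sum.cong) (auto simp: inner_Basis)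
    also have "\<dots> = - (pd j f x * pd i f x / (f x * f x))"
      by (rule sum_inner_Basis_delta(1)[OF that])
    finally show ?thesis .
  qed
  then have "ricci g (x, y) (i, 0) (j, 0) = (\<Sum>c\<in>(Basis::'b set). - (pd j f x * pd i f x / (f x * f x))
      - (pd j (pd i f) x * f x - pd i f x * pd j f x) / (f x)\<^sup>2)"
    using assms by (simp add: ricci_def sum_Basis_prod pd_quotient)
  also have "\<dots> = - real DIM('b) * pd j (pd i f) x / f x"
    by (simp add: field_simps power2_eq_square)
  finally show ?thesis .
qed

lemma ricci_warped_fibre_fibre:
  assumes "y \<in> U" "a \<in> Basis"
  shows "ricci g (x, y) (0, a) (0, a) = ricci gF y a a
     - gF y a a * (\<Sum>k\<in>Basis. f x * pd k (pd k f) x + (real DIM('b) - 1) * (pd k f x)\<^sup>2)"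
proof -
  have pd_f_pd_f: "pd i (\<lambda>x'. - (f x' * pd i f x' * c)) x = - c * (f x * pd i (pd i f) x + (pd i f x)\<^sup>2)"
    if "i \<in> Basis" for i c
  proof -
    have "pd i (\<lambda>x'. f x' * pd i f x') x = f x * pd i (pd i f) x + (pd i f x)\<^sup>2"
      using pd_mult[OF f_differentiable[OF that] pd_f_differentiable[OF that that]]
      by (simp add: power2_eq_square)
    moreover have "pd i (\<lambda>x'. - (f x' * pd i f x' * c)) x = - c * pd i (\<lambda>x'. f x' * pd i f x') x"
      using pd_mult[of "\<lambda>_. - c" x i "\<lambda>x'. f x' * pd i f x'"]
        differentiable_mult[OF f_differentiable[OF that] pd_f_differentiable[OF that that]]
      by (simp add: mult_ac)
    ultimately show ?thesis by simp
  qed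
  have sum_sq: "(\<Sum>i\<in>Basis. pd i f x * (pd i f x * c)) = c * (\<Sum>i\<in>Basis. pd i f x * pd i f x)" for c
    by (simp add: sum_distrib_left mult_ac)
  have sum_if: "(\<Sum>l\<in>A. if P then X l else 0) = (if P then (\<Sum>l\<in>A. X l) else (0::real))"
    for P A X by simp
  show ?thesis
    using assms
    apply (simp add: ricci_def sum_Basis_prod pd_f_pd_f inner_Basis sum.delta sum.delta' sum.distrib
        sum_subtractf sum_if if_distrib[of "\<lambda>x. x * _"] if_distrib[of "\<lambda>x. _ * x"] if_distrib[of uminus]
        cong: if_cong)
    apply (simp add: sum_negf sum.distrib power2_eq_square mult_ac flip: sum_distrib_left)
    apply (simp only: sum_sq)
    apply (simp add: algebra_simps)
    done
qed

lemma hessian_warped_base_base: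
  "y \<in> U \<Longrightarrow> i \<in> Basis \<Longrightarrow> j \<in> Basis \<Longrightarrow>
   hessian g (\<lambda>q. h (fst q)) (x, y) (i, 0) (j, 0) = pd i (pd j h) x"
  by (simp add: hessian_def sum_Basis_prod)

lemma hessian_warped_fibre_fibre:
  "y \<in> U \<Longrightarrow> a \<in> Basis \<Longrightarrow>
   hessian g (\<lambda>q. h (fst q)) (x, y) (0, a) (0, a) = gF y a a * f x * (\<Sum>k\<in>Basis. pd k f x * pd k h x)"
  by (simp add: hessian_def sum_Basis_prod sum_negf sum_distrib_left mult_ac)

end

locale warped_soliton = warped_product f gF U
  for f :: "'a::euclidean_space \<Rightarrow> real" and gF :: "'b::euclidean_space \<Rightarrow> 'b \<Rightarrow> 'b \<Rightarrow> real"
    and U :: "'b set" +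
  fixes h :: "'a \<Rightarrow> real" and \<rho> :: real
  assumes U_nonempty: "U \<noteq> {}"
    and soliton: "\<forall>p\<in>UNIV \<times> U. \<forall>u\<in>Basis. \<forall>v\<in>Basis.
      ricci g p u v + hessian g (\<lambda>q. h (fst q)) p u v = \<rho> * g p u v"
begin

lemma soliton_base:
  assumes "i \<in> Basis" "j \<in> Basis"
  shows "pd i (pd j h) x - real DIM('b) * pd j (pd i f) x / f x = \<rho> * (i \<bullet> j)"
proof -
  obtain y where y: "y \<in> U" using U_nonempty by blast
  then have "ricci g (x, y) (i, 0) (j, 0) + hessian g (\<lambda>q. h (fst q)) (x, y) (i, 0) (j, 0)
      = \<rho> * g (x, y) (i, 0) (j, 0)"
    using soliton assms by simp
  then show ?thesis
    using ricci_warped_base_base[OF y assms] hessian_warped_base_base[OF y assms] by simp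
qed

lemma soliton_fibre:
  assumes "y \<in> U" "a \<in> Basis"
  shows "ricci gF y a a - gF y a a * (\<Sum>k\<in>Basis. f x * pd k (pd k f) x + (real DIM('b) - 1) * (pd k f x)\<^sup>2)
     + gF y a a * f x * (\<Sum>k\<in>Basis. pd k f x * pd k h x) = \<rho> * ((f x)\<^sup>2 * gF y a a)"
proof -
  have "ricci g (x, y) (0, a) (0, a) + hessian g (\<lambda>q. h (fst q)) (x, y) (0, a) (0, a)
      = \<rho> * g (x, y) (0, a) (0, a)"
    using soliton assms by simp
  then show ?thesis
    using ricci_warped_fibre_fibre[OF assms] hessian_warped_fibre_fibre[OF assms] assms by simp
qed

context
  fixes e :: 'a and f1 :: "real \<Rightarrow> real"
  assumes e: "e \<in> Basis" and f_eq: "\<forall>x. f x = f1 (x \<bullet> e)"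
begin

lemma pd_f_one_variable: "k \<in> Basis \<Longrightarrow> pd k f x = (k \<bullet> e) * deriv f1 (x \<bullet> e)"
  using pd_comp_inner[OF _ e, of k f1] f_eq by (simp add: fun_eq_iff[symmetric])

lemma pd_pd_f_one_variable:
  assumes "i \<in> Basis" "j \<in> Basis"
  shows "pd j (pd i f) x = (j \<bullet> e) * (i \<bullet> e) * deriv (deriv f1) (x \<bullet> e)"
proof (cases "i = e")
  case True
  then have "pd i f = (\<lambda>x. deriv f1 (x \<bullet> e))"
    using pd_f_one_variable assms(1) e by auto
  then show ?thesis using pd_comp_inner[OF assms(2) e] True e by simp
next
  case False
  then have "pd i f = (\<lambda>x. 0)"
    using pd_f_one_variable assms(1) e by (auto simp: inner_not_same_Basis)
  then show ?thesis using False assms(1) e by (simp add: inner_not_same_Basis)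
qed

lemma f_scaleR: "f (t *\<^sub>R e) = f1 t"
  using f_eq e by simp

lemma hessian_potential_transversal:
  assumes "i \<in> Basis" "j \<in> Basis" "j \<noteq> e"
  shows "pd i (pd j h) x = \<rho> * (i \<bullet> j)"
  using soliton_base[OF assms(1,2), of x] pd_pd_f_one_variable[OF assms(1,2)] assms(2,3) e
  by (simp add: inner_not_same_Basis)

lemma soliton_ode_base:
  "f1 t * deriv (deriv (\<lambda>t. h (t *\<^sub>R e))) t - real DIM('b) * deriv (deriv f1) t = \<rho> * f1 t"
proof -
  have "deriv (\<lambda>t. h (t *\<^sub>R e)) = (\<lambda>t. pd e h (t *\<^sub>R e))"
    by (simp add: fun_eq_iff deriv_scaleR_eq_pd)
  then have "deriv (deriv (\<lambda>t. h (t *\<^sub>R e))) t = pd e (pd e h) (t *\<^sub>R e)"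
    by (simp add: deriv_scaleR_eq_pd)
  moreover have "pd e (pd e h) (t *\<^sub>R e) - real DIM('b) * deriv (deriv f1) t / f1 t = \<rho>"
    using soliton_base[OF e e, of "t *\<^sub>R e"] pd_pd_f_one_variable[OF e e] e by (simp add: f_scaleR)
  moreover have "f1 t > 0" using f_pos[of "t *\<^sub>R e"] by (simp add: f_scaleR)
  ultimately show ?thesis by (simp add: field_simps)
qed

lemma soliton_ode_fibre:
  assumes einstein: "\<forall>y\<in>U. \<forall>u\<in>Basis. \<forall>v\<in>Basis. ricci gF y u v = lamF * gF y u v"
  shows "lamF - f1 t * deriv (deriv f1) t - (real DIM('b) - 1) * (deriv f1 t)\<^sup>2
    + f1 t * deriv f1 t * deriv (\<lambda>t. h (t *\<^sub>R e)) t = \<rho> * (f1 t)\<^sup>2"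
proof -
  obtain y where y: "y \<in> U" using U_nonempty by blast
  obtain a :: 'b where a: "a \<in> Basis" using nonempty_Basis by blast
  let ?x = "t *\<^sub>R e"
  have warping_terms: "(\<Sum>k\<in>Basis. f ?x * pd k (pd k f) ?x + (real DIM('b) - 1) * (pd k f ?x)\<^sup>2)
      = f1 t * deriv (deriv f1) t + (real DIM('b) - 1) * (deriv f1 t)\<^sup>2"
  proof -
    have "(\<Sum>k\<in>Basis. f ?x * pd k (pd k f) ?x + (real DIM('b) - 1) * (pd k f ?x)\<^sup>2)
        = (\<Sum>k\<in>Basis. if k = e then f1 t * deriv (deriv f1) t + (real DIM('b) - 1) * (deriv f1 t)\<^sup>2 else 0)"
      using e by (intro sum.cong) (auto simp: pd_pd_f_one_variable pd_f_one_variable f_scaleR inner_Basis)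
    then show ?thesis using e by simp
  qed
  have gradient: "(\<Sum>k\<in>Basis. pd k f ?x * pd k h ?x) = deriv f1 t * deriv (\<lambda>t. h (t *\<^sub>R e)) t"
    using e by (simp add: pd_f_one_variable deriv_scaleR_eq_pd mult.assoc)
  have "gF y a a * (lamF - f1 t * deriv (deriv f1) t - (real DIM('b) - 1) * (deriv f1 t)\<^sup>2
      + f1 t * deriv f1 t * deriv (\<lambda>t. h (t *\<^sub>R e)) t) = gF y a a * (\<rho> * (f1 t)\<^sup>2)"
    using soliton_fibre[OF y a, of ?x] einstein y a
    unfolding warping_terms gradient by (simp add: f_scaleR algebra_simps)
  then show ?thesis using gF_diag_pos[OF y a] by simp
qed

end

end

lemma eq_clear_coords_if_deriv_zero:
  fixes \<phi> :: "real^'n \<Rightarrow> real"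
  assumes "\<And>j z s. j \<in> T \<Longrightarrow> ((\<lambda>s. \<phi> (z + s *\<^sub>R axis j 1)) has_real_derivative 0) (at s)"
  shows "\<phi> x = \<phi> (\<chi> i. if i \<in> T then 0 else x $ i)"
proof -
  have "finite T" by simp
  then show ?thesis using assms
  proof (induction T rule: finite_induct)
    case empty
    then show ?case by (simp add: vec_eq_iff)
  next
    case (insert j T)
    define z where "z = (\<chi> i. if i \<in> T then 0 else x $ i)"
    have "\<phi> x = \<phi> z" using insert unfolding z_def by blast
    also have "\<dots> = \<phi> (z + (- (z $ j)) *\<^sub>R axis j 1)"
      using DERIV_isconst_all[of "\<lambda>s. \<phi> (z + s *\<^sub>R axis j 1)" 0 "- (z $ j)"] insert.prems by simp
    also have "z + (- (z $ j)) *\<^sub>R axis j 1 = (\<chi> i. if i \<in> insert j T then 0 else x $ i)"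
      by (simp add: z_def vec_eq_iff axis_def)
    finally show ?case .
  qed
qed

lemma pd_axis_affine:
  fixes h :: "real^'n \<Rightarrow> real"
  assumes smooth: "coord_smooth_on UNIV h"
    and hess: "\<And>l x. pd (axis l 1) (pd (axis j 1) h) x = (if l = j then \<rho> else 0)"
  shows "pd (axis j 1) h x = \<rho> * x $ j + pd (axis j 1) h 0"
proof -
  define c where "c = (\<lambda>x. pd (axis j 1) h x - \<rho> * x $ j)"
  have "c x = c (\<chi> i. if i \<in> UNIV then 0 else x $ i)"
  proof (rule eq_clear_coords_if_deriv_zero)
    fix l :: 'n and z :: "real^'n" and s :: real
    have "((\<lambda>s. pd (axis j 1) h (z + s *\<^sub>R axis l 1)) has_real_derivative
        pd (axis l 1) (pd (axis j 1) h) (z + s *\<^sub>R axis l 1)) (at s)"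
      using coord_smooth_on_differentiable[OF smooth, of "[axis j 1]"]
      by (intro has_real_derivative_pd_line) simp
    then have "((\<lambda>s. pd (axis j 1) h (z + s *\<^sub>R axis l 1)) has_real_derivative
        (if l = j then \<rho> else 0)) (at s)"
      by (simp only: hess)
    then show "((\<lambda>s. c (z + s *\<^sub>R axis l 1)) has_real_derivative 0) (at s)"
      unfolding c_def by (auto intro!: derivative_eq_intros simp: axis_def)
  qed
  moreover have "(\<chi> i. if i \<in> UNIV then 0 else x $ i) = (0::real^'n)"
    by (simp add: vec_eq_iff)
  ultimately show ?thesis by (simp add: c_def)
qed

lemma has_real_derivative_quadratic_along_axis:
  fixes z :: "real^'n" and a :: "'n \<Rightarrow> real"
  assumes j: "j \<in> A"
  shows "((\<lambda>s. \<Sum>k\<in>A. \<rho>/2 * ((z + s *\<^sub>R axis j 1) $ k)\<^sup>2 + a k * (z + s *\<^sub>R axis j 1) $ k)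
    has_real_derivative \<rho> * (z $ j + s) + a j) (at s)"
proof -
  let ?rest = "\<Sum>k\<in>A - {j}. \<rho>/2 * (z $ k)\<^sup>2 + a k * z $ k"
  have "(\<Sum>k\<in>A. \<rho>/2 * ((z + s *\<^sub>R axis j 1) $ k)\<^sup>2 + a k * (z + s *\<^sub>R axis j 1) $ k)
      = \<rho>/2 * (z $ j + s)\<^sup>2 + a j * (z $ j + s) + ?rest" for s
  proof -
    have "(\<Sum>k\<in>A. \<rho>/2 * ((z + s *\<^sub>R axis j 1) $ k)\<^sup>2 + a k * (z + s *\<^sub>R axis j 1) $ k)
        = \<rho>/2 * (z $ j + s)\<^sup>2 + a j * (z $ j + s)
          + (\<Sum>k\<in>A - {j}. \<rho>/2 * ((z + s *\<^sub>R axis j 1) $ k)\<^sup>2 + a k * (z + s *\<^sub>R axis j 1) $ k)"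
      using j by (simp add: sum.remove axis_def)
    also have "(\<Sum>k\<in>A - {j}. \<rho>/2 * ((z + s *\<^sub>R axis j 1) $ k)\<^sup>2 + a k * (z + s *\<^sub>R axis j 1) $ k)
        = ?rest"
      by (intro sum.cong) (auto simp: axis_def)
    finally show ?thesis .
  qed
  moreover have "((\<lambda>s. \<rho>/2 * (z $ j + s)\<^sup>2 + a j * (z $ j + s) + ?rest) has_real_derivative
      \<rho> * (z $ j + s) + a j) (at s)"
    by (auto intro!: derivative_eq_intros simp: algebra_simps)
  ultimately show ?thesis by simp
qed

lemma quadratic_in_transversal_coords:
  fixes h :: "real^'n \<Rightarrow> real" and \<rho> :: real and i1 :: 'n
  assumes smooth: "coord_smooth_on UNIV h"
    and hess: "\<And>j l x. j \<noteq> i1 \<Longrightarrow> pd (axis l 1) (pd (axis j 1) h) x = (if l = j then \<rho> else 0)"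
  shows "h x = h ((x $ i1) *\<^sub>R axis i1 1)
    + (\<Sum>k\<in>UNIV - {i1}. \<rho>/2 * (x $ k)\<^sup>2 + pd (axis k 1) h 0 * x $ k)"
proof -
  define a where "a k = pd (axis k 1) h 0" for k
  define q where "q x = (\<Sum>k\<in>UNIV - {i1}. \<rho>/2 * (x $ k)\<^sup>2 + a k * x $ k)" for x
  have "h x - q x = (\<lambda>x. h x - q x) (\<chi> i. if i \<in> UNIV - {i1} then 0 else x $ i)"
  proof (rule eq_clear_coords_if_deriv_zero)
    fix j :: 'n and z :: "real^'n" and s :: real
    assume j: "j \<in> UNIV - {i1}"
    have hess_j: "pd (axis l 1) (pd (axis j 1) h) y = (if l = j then \<rho> else 0)" for l y
      using hess j by simp
    have "((\<lambda>s. h (z + s *\<^sub>R axis j 1)) has_real_derivative pd (axis j 1) h (z + s *\<^sub>R axis j 1)) (at s)"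
      using coord_smooth_on_differentiable[OF smooth, of "[]"] by (intro has_real_derivative_pd_line) simp
    moreover have "pd (axis j 1) h (z + s *\<^sub>R axis j 1) = \<rho> * (z + s *\<^sub>R axis j 1) $ j + a j"
      unfolding a_def by (rule pd_axis_affine[OF smooth hess_j])
    moreover have "((\<lambda>s. q (z + s *\<^sub>R axis j 1)) has_real_derivative \<rho> * (z $ j + s) + a j) (at s)"
      unfolding q_def using j by (rule has_real_derivative_quadratic_along_axis)
    ultimately show "((\<lambda>s. h (z + s *\<^sub>R axis j 1) - q (z + s *\<^sub>R axis j 1)) has_real_derivative 0) (at s)"
      using DERIV_diff by (fastforce simp: axis_def)
  qed
  moreover have "(\<chi> i. if i \<in> UNIV - {i1} then 0 else x $ i) = (x $ i1) *\<^sub>R axis i1 1"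
    by (simp add: vec_eq_iff axis_def)
  moreover have "q ((x $ i1) *\<^sub>R axis i1 1) = 0"
    by (simp add: q_def axis_def)
  ultimately show ?thesis by (simp add: q_def a_def)
qed

theorem theorem3:
  fixes f h :: "real^'n \<Rightarrow> real" and f1 :: "real \<Rightarrow> real"
    and gF :: "real^'m \<Rightarrow> real^'m \<Rightarrow> real^'m \<Rightarrow> real" and U :: "(real^'m) set"
    and lamF \<rho> :: real and i1 :: 'n
  assumes "CARD('n) \<ge> 2"
    and "U \<noteq> {}" and "riemannian_metric_on U gF"
    and "\<forall>y\<in>U. \<forall>u\<in>Basis. \<forall>v\<in>Basis. ricci gF y u v = lamF * gF y u v"
    and "coord_smooth_on UNIV f" and "coord_smooth_on UNIV h" and "\<forall>x. f x > 0"
    and "\<forall>p\<in>UNIV \<times> U. \<forall>u\<in>Basis. \<forall>v\<in>Basis.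
           ricci (warped_metric f gF) p u v + hessian (warped_metric f gF) (\<lambda>q. h (fst q)) p u v
             = \<rho> * warped_metric f gF p u v"
    and "\<forall>x. f x = f1 (x $ i1)"
  shows "\<exists>a b :: 'n \<Rightarrow> real. \<exists>h1 :: real \<Rightarrow> real. coord_smooth_on UNIV h1 \<and>
     (\<forall>x. h x = h1 (x $ i1) + (\<Sum>k\<in>UNIV - {i1}. \<rho>/2 * (x $ k)^2 + a k * x $ k + b k)) \<and>
     (\<forall>t. lamF - f1 t * deriv (deriv f1) t - (real CARD('m) - 1) * (deriv f1 t)^2
            + f1 t * deriv f1 t * deriv h1 t = \<rho> * (f1 t)^2 \<and>
          f1 t * deriv (deriv h1) t - real CARD('m) * deriv (deriv f1) t = \<rho> * f1 t)"
proof -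
  interpret warped_soliton f gF U h \<rho>
    using assms(2,3,5,7,8) by unfold_locales auto
  define e :: "real^'n" where "e = axis i1 1"
  have e: "e \<in> Basis" by (simp add: e_def)
  have f_eq: "\<forall>x. f x = f1 (x \<bullet> e)"
    using assms(9) by (simp add: e_def cart_eq_inner_axis)
  have "pd (axis l 1) (pd (axis j 1) h) x = (if l = j then \<rho> else 0)" if "j \<noteq> i1" for j l x
    using hessian_potential_transversal[OF e f_eq, of "axis l 1" "axis j 1" x] that
    by (simp add: e_def axis_eq_axis inner_axis_axis)
  then have h_split: "h x = h ((x $ i1) *\<^sub>R e)
      + (\<Sum>k\<in>UNIV - {i1}. \<rho>/2 * (x $ k)\<^sup>2 + pd (axis k 1) h 0 * x $ k + 0)" for x
    unfolding e_def add_0_right by (rule quadratic_in_transversal_coords[OF assms(6)])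
  show ?thesis
    using soliton_ode_base[OF e f_eq] soliton_ode_fibre[OF e f_eq assms(4)]
    by (intro exI[of _ "\<lambda>k. pd (axis k 1) h 0"] exI[of _ "\<lambda>_. 0"] exI[of _ "\<lambda>t. h (t *\<^sub>R e)"]
        conjI allI coord_smooth_on_comp_scaleR[OF assms(6) e] h_split) simp_all
qed

end
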